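(* Let $P\in\mathcal I(n)$ be nonzero, write $P=S\cdot Q$, and let $K$ be the support of the Newton diagram of $Q$. (i) If $P$ is indecomposable, then $K$ is connected. (ii) The size of $K$ equals the p-degree of $P$.
   Context: $S(X)=X_0+X_1+\dots+X_n$. $\mathcal I(n)$ denotes the set of homogeneous polynomials $P\in\mathbb R[X_0,\dots,X_n]$ with $P(X)=0$ whenever $S(X)=0$ (such $P$ is divisible by $S$). The p-degree of $P$ is the smallest integer $d$ such that $P=X^\alpha R$ for some monomial $X^\alpha$ and some polynomial $R$ of degree $d$. $P\in\mathcal I(n)$ is indecomposable if one cannot write $P=P_1+P_2$ with $P_1,P_2\in\mathcal I(n)$ both nonzero and having no monomial in common. For nonzero $P$ of degree $d$ with $P=SQ$, the Newton diagram of $Q$ is the function $D\colon\mathbb Z^n\to\{0,P,N\}$ assigning to $m$ the value $P$, $0$, or $N$ according as the coefficient of $X_0^{d-1-|m|}X_1^{m_1}\cdots X_n^{m_n}$ in $Q$ is positive, zero (including when some exponent is negative), or negative; here $|m|=m_1+\dots+m_n$. Its support is $K=D^{-1}(\{P,N\})\subset\mathbb N_0^n$. With $e_1,\dots,e_n$ the standard basis, two distinct points $m,m'$ are adjacent if $m-m'\in\{\pm e_j\}\cup\{e_j-e_k: j\ne k\}$; $K$ is connected if any two points of $K$ are joined by a path of successively adjacent points of $K$. The size of $K$ is $k-|a|+1$ where $k=\max_{m\in K}|m|$ and $a_j=\min_{m\in K}m_j$. *)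

theory Defs
  imports Complex_Main "HOL-Library.Poly_Mapping"
begin

text \<open>Polynomials in R[X_0, X_1, ...] are finitely supported maps from monomials
(exponent vectors, nat =>0 nat) to real coefficients; a polynomial in
R[X_0,...,X_n] is one whose monomials only involve variables 0..n.\<close>

type_synonym mpoly = "(nat \<Rightarrow>\<^sub>0 nat) \<Rightarrow>\<^sub>0 real"

definition mdeg :: "(nat \<Rightarrow>\<^sub>0 nat) \<Rightarrow> nat" where
  "mdeg \<alpha> = (\<Sum>i\<in>Poly_Mapping.keys \<alpha>. Poly_Mapping.lookup \<alpha> i)"

definition tdeg :: "mpoly \<Rightarrow> nat" where
  "tdeg P = (if Poly_Mapping.keys P = {} then 0 else Max (mdeg ` Poly_Mapping.keys P))"

definition in_vars :: "nat \<Rightarrow> mpoly \<Rightarrow> bool" where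
  "in_vars n P \<longleftrightarrow> (\<forall>\<alpha>\<in>Poly_Mapping.keys P. Poly_Mapping.keys \<alpha> \<subseteq> {..n})"

definition homogeneous :: "mpoly \<Rightarrow> bool" where
  "homogeneous P \<longleftrightarrow> (\<exists>d. \<forall>\<alpha>\<in>Poly_Mapping.keys P. mdeg \<alpha> = d)"

definition peval :: "mpoly \<Rightarrow> (nat \<Rightarrow> real) \<Rightarrow> real" where
  "peval P x = (\<Sum>\<alpha>\<in>Poly_Mapping.keys P. Poly_Mapping.lookup P \<alpha> * (\<Prod>i\<in>Poly_Mapping.keys \<alpha>. x i ^ Poly_Mapping.lookup \<alpha> i))"

definition Xvar :: "nat \<Rightarrow> mpoly" where
  "Xvar i = Poly_Mapping.single (Poly_Mapping.single i 1) 1"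

definition Xmon :: "(nat \<Rightarrow>\<^sub>0 nat) \<Rightarrow> mpoly" where
  "Xmon \<alpha> = Poly_Mapping.single \<alpha> 1"

definition Spoly :: "nat \<Rightarrow> mpoly" where
  "Spoly n = (\<Sum>i\<le>n. Xvar i)"

definition In :: "nat \<Rightarrow> mpoly set" where
  "In n = {P. in_vars n P \<and> homogeneous P \<and>
              (\<forall>x::nat \<Rightarrow> real. (\<Sum>i\<le>n. x i) = 0 \<longrightarrow> peval P x = 0)}"

definition pdeg :: "mpoly \<Rightarrow> nat" where
  "pdeg P = (LEAST d. \<exists>\<alpha> R. P = Xmon \<alpha> * R \<and> tdeg R = d)"

definition indecomposable :: "nat \<Rightarrow> mpoly \<Rightarrow> bool" where
  "indecomposable n P \<longleftrightarrow> P \<in> In n \<and>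
     \<not> (\<exists>P1 P2. P1 \<in> In n \<and> P2 \<in> In n \<and> P1 \<noteq> 0 \<and> P2 \<noteq> 0 \<and>
              Poly_Mapping.keys P1 \<inter> Poly_Mapping.keys P2 = {} \<and> P = P1 + P2)"

text \<open>Points of Z^n / N_0^n are functions nat => nat (or int) supported on {1..n}.\<close>
definition absm :: "nat \<Rightarrow> (nat \<Rightarrow> nat) \<Rightarrow> nat" where
  "absm n m = (\<Sum>j=1..n. m j)"

text \<open>Support of the Newton diagram of Q (P = S*Q of degree d): the m in N_0^n
for which the coefficient of X_0^(d-1-|m|) X_1^m_1 ... X_n^m_n in Q is nonzero.\<close>
definition newton_support :: "nat \<Rightarrow> nat \<Rightarrow> mpoly \<Rightarrow> (nat \<Rightarrow> nat) set" where
  "newton_support n d Q = {m. (\<forall>j. j \<notin> {1..n} \<longrightarrow> m j = 0) \<and> absm n m + 1 \<le> d \<and>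
      Poly_Mapping.lookup Q (Abs_poly_mapping (\<lambda>j. if j = 0 then d - 1 - absm n m else m j)) \<noteq> 0}"

definition unitv :: "nat \<Rightarrow> nat \<Rightarrow> int" where
  "unitv j = (\<lambda>i. if i = j then 1 else 0)"

definition adjacent :: "nat \<Rightarrow> (nat \<Rightarrow> nat) \<Rightarrow> (nat \<Rightarrow> nat) \<Rightarrow> bool" where
  "adjacent n m m' \<longleftrightarrow> m \<noteq> m' \<and>
     (let v = (\<lambda>i. int (m i) - int (m' i)) in
       \<exists>j\<in>{1..n}. v = unitv j \<or> v = - unitv j \<or>
                  (\<exists>k\<in>{1..n}. j \<noteq> k \<and> v = unitv j - unitv k))"

definition connected_set :: "nat \<Rightarrow> (nat \<Rightarrow> nat) set \<Rightarrow> bool" where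
  "connected_set n K \<longleftrightarrow>
     (\<forall>a\<in>K. \<forall>b\<in>K. (\<lambda>x y. x \<in> K \<and> y \<in> K \<and> adjacent n x y)\<^sup>*\<^sup>* a b)"

definition size_set :: "nat \<Rightarrow> (nat \<Rightarrow> nat) set \<Rightarrow> int" where
  "size_set n K = int (Max (absm n ` K)) - int (\<Sum>j=1..n. Min ((\<lambda>m. m j) ` K)) + 1"

end

theory Submission
  imports Defs
begin

(* Without a library of
   multivariate polynomials, all degree information is extracted from one tool,
   extremal_keys_mult: for an additive weight w, the product of two nonzero
   polynomials contains the sum of w-maximal monomials of the factors.  From it:
   Q is homogeneous of degree deg P - 1 in X_0..X_n, and (for n >= 1) the minimal
   exponent of each X_i is the same in P and in Q.
   (ii) The p-degree of a homogeneous P is deg P minus the degree of the gcd of its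
   monomials (pdeg_eq_minexp).  The Newton diagram of Q is the set of Newton points
   (b_1,..,b_n) of the monomials b of Q (newton_support_eq); its size is again
   deg P minus the degree of that gcd (size_newton_points).
   (i) If the Newton points of Q were disconnected, splitting the monomials of Q along
   a component splits P = S Q1 + S Q2 into two elements of I(n); since indecomposable,
   they share a monomial X_i c1 = X_j c2, whose Newton points are then adjacent
   (adjacent_of_common_multiple) -- contradicting the choice of the component. *)

abbreviation lk :: "('a \<Rightarrow>\<^sub>0 'b::zero) \<Rightarrow> 'a \<Rightarrow> 'b" where "lk \<equiv> Poly_Mapping.lookup"
abbreviation ks :: "('a \<Rightarrow>\<^sub>0 'b::zero) \<Rightarrow> 'a set" where "ks \<equiv> Poly_Mapping.keys"

lemma lookup_mult_keys:
  fixes f g :: mpoly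
  shows "lk (f * g) k = (\<Sum>a\<in>ks f. lk f a * (\<Sum>b\<in>ks g. (lk g b when k = a + b)))"
proof -
  have inner: "(\<Sum>q. lk g q when k = l + q) = (\<Sum>b\<in>ks g. (lk g b when k = l + b))" for l
    by (rule Sum_any.expand_superset) (auto simp: in_keys_iff)
  have "lk (f * g) k = (\<Sum>l. lk f l * (\<Sum>b\<in>ks g. (lk g b when k = l + b)))"
    by (simp add: lookup_mult inner)
  also have "\<dots> = (\<Sum>a\<in>ks f. lk f a * (\<Sum>b\<in>ks g. (lk g b when k = a + b)))"
    by (rule Sum_any.expand_superset) (auto simp: in_keys_iff)
  finally show ?thesis .
qed

lemma lookup_mult_unique_decomp:
  fixes A B :: mpoly
  assumes uniq: "\<And>a b. a \<in> ks A \<Longrightarrow> b \<in> ks B \<Longrightarrow> a + b = a0 + b0 \<Longrightarrow> a = a0 \<and> b = b0"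
  shows "lk (A * B) (a0 + b0) = lk A a0 * lk B b0"
proof -
  have inner: "(\<Sum>b\<in>ks B. (lk B b when a0 + b0 = a + b)) = (if a = a0 then lk B b0 else 0)"
    if a: "a \<in> ks A" for a
  proof -
    have "(\<Sum>b\<in>ks B. (lk B b when a0 + b0 = a + b))
        = (\<Sum>b\<in>ks B. if a = a0 \<and> b = b0 then lk B b0 else 0)"
      by (rule sum.cong[OF refl]) (use uniq a in \<open>auto simp: when_def\<close>)
    then show ?thesis by (auto simp: sum.delta' in_keys_iff)
  qed
  have "lk (A * B) (a0 + b0) = (\<Sum>a\<in>ks A. if a = a0 then lk A a0 * lk B b0 else 0)"
    unfolding lookup_mult_keys by (rule sum.cong[OF refl]) (simp add: inner)
  then show ?thesis by (auto simp: sum.delta' in_keys_iff)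
qed

lemma lookup_single_mult:
  fixes R :: mpoly
  shows "lk (Poly_Mapping.single \<alpha> c * R) (\<alpha> + b) = c * lk R b"
  by (subst lookup_mult_unique_decomp) (auto split: if_splits)

lemma keys_Xmon_mult: "ks (Xmon \<alpha> * R) = (\<lambda>b. \<alpha> + b) ` ks R"
proof
  show "ks (Xmon \<alpha> * R) \<subseteq> (\<lambda>b. \<alpha> + b) ` ks R"
    using keys_mult[of "Xmon \<alpha>" R] by (auto simp: Xmon_def)
  show "(\<lambda>b. \<alpha> + b) ` ks R \<subseteq> ks (Xmon \<alpha> * R)"
    by (auto simp: in_keys_iff Xmon_def lookup_single_mult)
qed

lemma mdeg_superset:
  assumes "finite F" "ks \<alpha> \<subseteq> F"
  shows "mdeg \<alpha> = (\<Sum>i\<in>F. lk \<alpha> i)"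
  unfolding mdeg_def
  by (rule sum.mono_neutral_left) (use assms in \<open>auto simp: in_keys_iff\<close>)

lemma mdeg_add: "mdeg (a + b) = mdeg a + mdeg b"
proof -
  let ?F = "ks a \<union> ks b"
  have "mdeg (a + b) = (\<Sum>i\<in>?F. lk (a + b) i)"
    using keys_add[of a b] by (intro mdeg_superset) auto
  also have "\<dots> = (\<Sum>i\<in>?F. lk a i) + (\<Sum>i\<in>?F. lk b i)"
    by (simp add: lookup_add sum.distrib)
  also have "\<dots> = mdeg a + mdeg b"
    by (subst (1 2) mdeg_superset[of ?F]) auto
  finally show ?thesis .
qed

lemma mdeg_single [simp]: "mdeg (Poly_Mapping.single i k) = k"
  unfolding mdeg_def by (cases "k = 0") auto

text \<open>For an additive weight w, the product of
  two nonzero polynomials contains the monomial a + b where a, b are w-maximal keys of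
  the factors (ties broken by the lexicographic order on exponent vectors, which makes
  the decomposition of a + b unique).  Degrees, variables and minimal exponents of
  factors are all obtained from this fact with suitable weights.\<close>
lemma extremal_keys_mult:
  fixes A B :: mpoly and w :: "(nat \<Rightarrow>\<^sub>0 nat) \<Rightarrow> int"
  assumes add: "\<And>a b. w (a + b) = w a + w b" and "A \<noteq> 0" "B \<noteq> 0"
  shows "\<exists>a\<in>ks A. \<exists>b\<in>ks B. a + b \<in> ks (A * B) \<and>
           (\<forall>a'\<in>ks A. w a' \<le> w a) \<and> (\<forall>b'\<in>ks B. w b' \<le> w b)"
proof -
  define A0 where "A0 = {a\<in>ks A. \<forall>a'\<in>ks A. w a' \<le> w a}"
  define B0 where "B0 = {b\<in>ks B. \<forall>b'\<in>ks B. w b' \<le> w b}"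
  have "A0 \<noteq> {}" "B0 \<noteq> {}"
    using assms(2,3) ex_is_arg_min_if_finite[of "ks A" "\<lambda>a. - w a"]
      ex_is_arg_min_if_finite[of "ks B" "\<lambda>b. - w b"]
    unfolding A0_def B0_def is_arg_min_linorder by auto
  moreover have "finite A0" "finite B0" unfolding A0_def B0_def by auto
  ultimately have a0: "Max A0 \<in> A0" and b0: "Max B0 \<in> B0" by auto
  have uniq: "a = Max A0 \<and> b = Max B0"
    if "a \<in> ks A" "b \<in> ks B" "a + b = Max A0 + Max B0" for a b
  proof -
    have "w a + w b = w (Max A0) + w (Max B0)" using that(3) add by metis
    moreover have "w a \<le> w (Max A0)" "w b \<le> w (Max B0)"
      using a0 b0 that(1,2) unfolding A0_def B0_def by auto
    ultimately have "w a = w (Max A0)" "w b = w (Max B0)" by linarith+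
    then have "a \<in> A0" "b \<in> B0"
      using a0 b0 that(1,2) unfolding A0_def B0_def by auto
    then have "a \<le> Max A0" "b \<le> Max B0" using \<open>finite A0\<close> \<open>finite B0\<close> by auto
    with that(3) show ?thesis
      by (metis add_le_cancel_left add_le_cancel_right order.antisym)
  qed
  have "lk (A * B) (Max A0 + Max B0) = lk A (Max A0) * lk B (Max B0)"
    using uniq by (rule lookup_mult_unique_decomp)
  also have "\<dots> \<noteq> 0" using a0 b0 unfolding A0_def B0_def by (auto simp: in_keys_iff)
  finally have "Max A0 + Max B0 \<in> ks (A * B)" by (simp add: in_keys_iff)
  with a0 b0 show ?thesis unfolding A0_def B0_def by blast
qed

lemma homogeneous_tdeg:
  assumes "homogeneous P" "\<mu> \<in> ks P"
  shows "mdeg \<mu> = tdeg P"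
proof -
  obtain d where d: "\<forall>\<alpha>\<in>ks P. mdeg \<alpha> = d" using assms(1) unfolding homogeneous_def by blast
  then have "mdeg ` ks P = {d}" using assms(2) by auto
  then show ?thesis using d assms(2) unfolding tdeg_def by auto
qed

text \<open>A factor of a homogeneous polynomial is homogeneous: compare a key of maximal
  and a key of minimal degree in the second factor.\<close>
lemma homogeneous_factor:
  fixes A B :: mpoly
  assumes hom: "homogeneous (A * B)" and "A \<noteq> 0" "B \<noteq> 0"
  shows "homogeneous B"
proof -
  obtain a1 b1 where a1: "a1 \<in> ks A" and b1: "b1 \<in> ks B" and ab1: "a1 + b1 \<in> ks (A * B)"
    and max_a: "\<forall>a\<in>ks A. mdeg a \<le> mdeg a1" and max_b: "\<forall>b\<in>ks B. mdeg b \<le> mdeg b1"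
    using extremal_keys_mult[of "\<lambda>a. int (mdeg a)" A B] assms by (auto simp: mdeg_add)
  obtain a2 b2 where a2: "a2 \<in> ks A" and b2: "b2 \<in> ks B" and ab2: "a2 + b2 \<in> ks (A * B)"
    and min_a: "\<forall>a\<in>ks A. mdeg a2 \<le> mdeg a" and min_b: "\<forall>b\<in>ks B. mdeg b2 \<le> mdeg b"
    using extremal_keys_mult[of "\<lambda>a. - int (mdeg a)" A B] assms by (auto simp: mdeg_add)
  have "mdeg a1 + mdeg b1 = mdeg a2 + mdeg b2"
    using homogeneous_tdeg[OF hom ab1] homogeneous_tdeg[OF hom ab2] by (simp add: mdeg_add)
  moreover have "mdeg a2 \<le> mdeg a1" "mdeg b2 \<le> mdeg b1" using a1 b1 min_a min_b by auto
  ultimately have "mdeg b1 = mdeg b2" by linarith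
  then have "\<forall>b\<in>ks B. mdeg b = mdeg b1" using max_b min_b by (metis order.antisym)
  then show ?thesis unfolding homogeneous_def by blast
qed

text \<open>A factor of a polynomial in the variables X_0..X_n involves only these variables:
  a key of the factor with maximal exponent of X_j survives in the product.\<close>
lemma in_vars_factor:
  fixes A B :: mpoly
  assumes vars: "in_vars n (A * B)" and "A \<noteq> 0" "B \<noteq> 0"
  shows "in_vars n B"
  unfolding in_vars_def
proof (intro ballI subsetI)
  fix b j assume b: "b \<in> ks B" and j: "j \<in> ks b"
  obtain a1 b1 where ab1: "a1 + b1 \<in> ks (A * B)" and max_b: "\<forall>b'\<in>ks B. lk b' j \<le> lk b1 j"
    using extremal_keys_mult[of "\<lambda>a. int (lk a j)" A B] assms by (auto simp: lookup_add)
  have "0 < lk b j" using j by (simp add: in_keys_iff)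
  also have "\<dots> \<le> lk (a1 + b1) j" using max_b b by (fastforce simp: lookup_add)
  finally have "j \<in> ks (a1 + b1)" by (simp add: in_keys_iff)
  then show "j \<in> {..n}" using vars ab1 unfolding in_vars_def by blast
qed

definition minexp :: "mpoly \<Rightarrow> nat \<Rightarrow> nat" where
  "minexp F i = Min ((\<lambda>b. lk b i) ` ks F)"

lemma minexp_le: "b \<in> ks F \<Longrightarrow> minexp F i \<le> lk b i"
  unfolding minexp_def by auto

lemma minexp_attained: "F \<noteq> 0 \<Longrightarrow> \<exists>b\<in>ks F. lk b i = minexp F i"
  unfolding minexp_def by (metis (no_types, lifting) Min_in finite_imageI finite_keys
      image_iff image_is_empty keys_eq_empty)

definition monomial_quot :: "(nat \<Rightarrow>\<^sub>0 nat) \<Rightarrow> mpoly \<Rightarrow> mpoly" where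
  "monomial_quot \<alpha> P = Abs_poly_mapping (\<lambda>\<mu>. lk P (\<alpha> + \<mu>))"

lemma lookup_monomial_quot: "lk (monomial_quot \<alpha> P) \<mu> = lk P (\<alpha> + \<mu>)"
proof -
  have "{\<mu>. lk P (\<alpha> + \<mu>) \<noteq> 0} = (\<lambda>\<mu>. \<alpha> + \<mu>) -` ks P" by (auto simp: in_keys_iff)
  moreover have "finite ((\<lambda>\<mu>. \<alpha> + \<mu>) -` ks P)" by (rule finite_vimageI) (auto intro: injI)
  ultimately show ?thesis unfolding monomial_quot_def by simp
qed

lemma Xmon_mult_monomial_quot:
  assumes dvd: "\<And>\<mu> i. \<mu> \<in> ks P \<Longrightarrow> lk \<alpha> i \<le> lk \<mu> i"
  shows "P = Xmon \<alpha> * monomial_quot \<alpha> P"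
proof (rule poly_mapping_eqI)
  fix k
  show "lk P k = lk (Xmon \<alpha> * monomial_quot \<alpha> P) k"
  proof (cases "k \<in> ks P")
    case True
    then have "k = \<alpha> + (k - \<alpha>)"
      using dvd by (intro poly_mapping_eqI) (simp add: lookup_add lookup_minus)
    then show ?thesis
      by (metis Xmon_def lookup_monomial_quot lookup_single_mult mult_1)
  next
    case False
    then have "k \<notin> ks (Xmon \<alpha> * monomial_quot \<alpha> P)"
      by (auto simp: keys_Xmon_mult in_keys_iff lookup_monomial_quot)
    then show ?thesis using False by (simp add: in_keys_iff)
  qed
qed

lemma tdeg_Xmon_factor:
  assumes P: "P = Xmon \<alpha> * R" "P \<noteq> 0" "homogeneous P"
  shows "tdeg R = tdeg P - mdeg \<alpha>"
proof -
  have keys: "ks P = (\<lambda>b. \<alpha> + b) ` ks R" using P(1) keys_Xmon_mult by simp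
  have deg: "mdeg b = tdeg P - mdeg \<alpha>" if "b \<in> ks R" for b
    using homogeneous_tdeg[OF P(3), of "\<alpha> + b"] keys that by (simp add: mdeg_add)
  obtain b0 where b0: "b0 \<in> ks R" using P(1,2) by fastforce
  with deg have "mdeg ` ks R = {tdeg P - mdeg \<alpha>}" by auto
  then show ?thesis unfolding tdeg_def[of R] using b0 by auto
qed

lemma Xmon_factor_mdeg_le:
  assumes P: "P = Xmon \<alpha> * R" "P \<noteq> 0" and vars: "in_vars n P"
  shows "mdeg \<alpha> \<le> (\<Sum>i\<le>n. minexp P i)"
proof -
  have keys: "ks P = (\<lambda>b. \<alpha> + b) ` ks R" using P(1) keys_Xmon_mult by simp
  have le: "lk \<alpha> i \<le> minexp P i" for i
  proof -
    obtain \<mu> where "\<mu> \<in> ks P" "lk \<mu> i = minexp P i" using minexp_attained[OF P(2)] by blast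
    with keys show ?thesis by (auto simp: lookup_add)
  qed
  obtain \<mu> where "\<mu> \<in> ks P" using P(2) by fastforce
  then obtain b0 where "\<alpha> + b0 \<in> ks P" using keys by auto
  moreover have "ks \<alpha> \<subseteq> ks (\<alpha> + b0)" by (auto simp: in_keys_iff lookup_add)
  ultimately have "ks \<alpha> \<subseteq> {..n}" using vars unfolding in_vars_def by blast
  then have "mdeg \<alpha> = (\<Sum>i\<le>n. lk \<alpha> i)" by (intro mdeg_superset) auto
  also have "\<dots> \<le> (\<Sum>i\<le>n. minexp P i)" using le by (rule sum_mono)
  finally show ?thesis .
qed

definition gcd_monomial :: "nat \<Rightarrow> mpoly \<Rightarrow> (nat \<Rightarrow>\<^sub>0 nat)" where
  "gcd_monomial n P = Abs_poly_mapping (\<lambda>i. if i \<le> n then minexp P i else 0)"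

lemma lookup_gcd_monomial: "lk (gcd_monomial n P) i = (if i \<le> n then minexp P i else 0)"
proof -
  have "finite {i. (if i \<le> n then minexp P i else 0) \<noteq> 0}"
    by (rule finite_subset[of _ "{..n}"]) auto
  then show ?thesis unfolding gcd_monomial_def by simp
qed

lemma mdeg_gcd_monomial: "mdeg (gcd_monomial n P) = (\<Sum>i\<le>n. minexp P i)"
  by (subst mdeg_superset[of "{..n}"]) (auto simp: in_keys_iff lookup_gcd_monomial split: if_splits)

text \<open>The p-degree of a nonzero homogeneous polynomial: pull out the gcd of its
  monomials, which is the largest possible monomial factor.\<close>
lemma pdeg_eq_minexp:
  assumes "P \<noteq> 0" "homogeneous P" "in_vars n P"
  shows "pdeg P = tdeg P - (\<Sum>i\<le>n. minexp P i)"
  unfolding pdeg_def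
proof (rule Least_equality)
  let ?g = "gcd_monomial n P"
  have "P = Xmon ?g * monomial_quot ?g P"
    by (rule Xmon_mult_monomial_quot) (auto simp: lookup_gcd_monomial minexp_le)
  with assms show "\<exists>\<alpha> R. P = Xmon \<alpha> * R \<and> tdeg R = tdeg P - (\<Sum>i\<le>n. minexp P i)"
    using tdeg_Xmon_factor by (metis mdeg_gcd_monomial)
next
  fix d assume "\<exists>\<alpha> R. P = Xmon \<alpha> * R \<and> tdeg R = d"
  then obtain \<alpha> R where "P = Xmon \<alpha> * R" "tdeg R = d" by blast
  with assms show "tdeg P - (\<Sum>i\<le>n. minexp P i) \<le> d"
    using tdeg_Xmon_factor Xmon_factor_mdeg_le by fastforce
qed

lemma mult_nonzero:
  fixes A B :: mpoly
  assumes "A \<noteq> 0" "B \<noteq> 0"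
  shows "A * B \<noteq> 0"
  using extremal_keys_mult[of "\<lambda>_. 0" A B] assms by auto

lemma lookup_Spoly: "lk (Spoly n) \<mu> = (\<Sum>i\<le>n. (1 when Poly_Mapping.single i 1 = \<mu>))"
  unfolding Spoly_def Xvar_def by (simp add: lookup_sum lookup_single)

lemma keys_Spoly: "ks (Spoly n) = (\<lambda>i. Poly_Mapping.single i 1) ` {..n}"
proof
  show "ks (Spoly n) \<subseteq> (\<lambda>i. Poly_Mapping.single i 1) ` {..n}"
  proof
    fix \<mu> assume "\<mu> \<in> ks (Spoly n)"
    then have "(\<Sum>i\<le>n. (1::real) when Poly_Mapping.single i 1 = \<mu>) \<noteq> 0"
      by (simp add: in_keys_iff lookup_Spoly)
    then obtain i where "i \<le> n" "((1::real) when Poly_Mapping.single i 1 = \<mu>) \<noteq> 0"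
      by (rule sum.not_neutral_contains_not_neutral) simp
    then have "Poly_Mapping.single i 1 = \<mu>" by (simp add: when_def split: if_splits)
    with \<open>i \<le> n\<close> show "\<mu> \<in> (\<lambda>i. Poly_Mapping.single i 1) ` {..n}" by auto
  qed
  have single_inj: "Poly_Mapping.single i k = Poly_Mapping.single j k \<longleftrightarrow> i = j"
    if "(k::nat) \<noteq> 0" for i j k
    by (metis lookup_single_eq lookup_single_not_eq that)
  show "(\<lambda>i. Poly_Mapping.single i 1) ` {..n} \<subseteq> ks (Spoly n)"
    by (auto simp: in_keys_iff lookup_Spoly when_def single_inj)
qed

lemma Spoly_nonzero: "Spoly n \<noteq> 0"
  using keys_Spoly[of n] by auto

lemma keys_Spoly_mult:
  assumes "\<mu> \<in> ks (Spoly n * Q)"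
  obtains j b where "j \<le> n" "b \<in> ks Q" "\<mu> = Poly_Mapping.single j 1 + b"
  using keys_mult[of "Spoly n" Q] assms unfolding keys_Spoly by blast

text \<open>Multiplying by S does not change the minimal exponent of any variable (for n \<ge> 1
  a monomial of S avoiding X_i always exists).\<close>
lemma minexp_Spoly_mult:
  assumes "n \<ge> 1" "Q \<noteq> 0"
  shows "minexp (Spoly n * Q) i = minexp Q i"
proof (rule order.antisym)
  obtain a1 b1 where a1: "a1 \<in> ks (Spoly n)" and b1: "b1 \<in> ks Q"
    and ab1: "a1 + b1 \<in> ks (Spoly n * Q)"
    and min_a: "\<forall>a\<in>ks (Spoly n). lk a1 i \<le> lk a i" and min_b: "\<forall>b\<in>ks Q. lk b1 i \<le> lk b i"
    using extremal_keys_mult[of "\<lambda>a. - int (lk a i)" "Spoly n" Q] Spoly_nonzero assms(2)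
    by (auto simp: lookup_add)
  obtain j where j: "j \<le> n" "j \<noteq> i" using assms(1) by (cases "i = 0") auto
  then have "Poly_Mapping.single j 1 \<in> ks (Spoly n)" by (auto simp: keys_Spoly)
  then have "lk a1 i = 0" using min_a j by (force simp: lookup_single)
  moreover have "lk b1 i = minexp Q i"
    using min_b minexp_le[OF b1] minexp_attained[OF assms(2), of i] by (metis order.antisym)
  ultimately show "minexp (Spoly n * Q) i \<le> minexp Q i"
    using minexp_le[OF ab1, of i] by (simp add: lookup_add)
next
  obtain \<mu> where "\<mu> \<in> ks (Spoly n * Q)" "lk \<mu> i = minexp (Spoly n * Q) i"
    using minexp_attained mult_nonzero[OF Spoly_nonzero assms(2)] by blast
  moreover from this(1) obtain j b where "b \<in> ks Q" "\<mu> = Poly_Mapping.single j 1 + b"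
    by (rule keys_Spoly_mult)
  ultimately show "minexp Q i \<le> minexp (Spoly n * Q) i"
    using minexp_le[of b Q i] by (simp add: lookup_add)
qed

lemma degree_Spoly_factor:
  assumes hom: "homogeneous (Spoly n * Q)" and "Q \<noteq> 0" and b: "b \<in> ks Q"
  shows "mdeg b + 1 = tdeg (Spoly n * Q)"
proof -
  obtain \<mu> where \<mu>: "\<mu> \<in> ks (Spoly n * Q)"
    using mult_nonzero[OF Spoly_nonzero \<open>Q \<noteq> 0\<close>] by fastforce
  then obtain j c where c: "c \<in> ks Q" "\<mu> = Poly_Mapping.single j 1 + c"
    by (rule keys_Spoly_mult)
  have "homogeneous Q" using homogeneous_factor[OF hom Spoly_nonzero \<open>Q \<noteq> 0\<close>] .
  then have "mdeg b = mdeg c" using b c(1) unfolding homogeneous_def by auto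
  then show ?thesis using homogeneous_tdeg[OF hom \<mu>] c(2) by (simp add: mdeg_add)
qed

definition mon_value :: "(nat \<Rightarrow>\<^sub>0 nat) \<Rightarrow> (nat \<Rightarrow> real) \<Rightarrow> real" where
  "mon_value \<mu> x = (\<Prod>i\<in>ks \<mu>. x i ^ lk \<mu> i)"

lemma mon_value_superset:
  "finite F \<Longrightarrow> ks \<mu> \<subseteq> F \<Longrightarrow> mon_value \<mu> x = (\<Prod>i\<in>F. x i ^ lk \<mu> i)"
  unfolding mon_value_def by (rule prod.mono_neutral_left) (auto simp: in_keys_iff)

lemma mon_value_add: "mon_value (a + b) x = mon_value a x * mon_value b x"
proof -
  let ?F = "ks a \<union> ks b"
  have "mon_value (a + b) x = (\<Prod>i\<in>?F. x i ^ lk (a + b) i)"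
    using keys_add[of a b] by (intro mon_value_superset) auto
  also have "\<dots> = (\<Prod>i\<in>?F. x i ^ lk a i) * (\<Prod>i\<in>?F. x i ^ lk b i)"
    by (simp add: lookup_add power_add prod.distrib)
  also have "\<dots> = mon_value a x * mon_value b x"
    by (subst (1 2) mon_value_superset[of ?F]) auto
  finally show ?thesis .
qed

lemma mon_value_single: "mon_value (Poly_Mapping.single i k) x = x i ^ k"
  unfolding mon_value_def by (cases "k = 0") auto

lemma peval_superset:
  "finite F \<Longrightarrow> ks A \<subseteq> F \<Longrightarrow> peval A x = (\<Sum>\<mu>\<in>F. lk A \<mu> * mon_value \<mu> x)"
  unfolding peval_def mon_value_def[symmetric]
  by (rule sum.mono_neutral_left) (auto simp: in_keys_iff)

lemma peval_add: "peval (A + B) x = peval A x + peval B x"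
proof -
  let ?F = "ks A \<union> ks B"
  have "peval (A + B) x = (\<Sum>\<mu>\<in>?F. lk (A + B) \<mu> * mon_value \<mu> x)"
    using keys_add[of A B] by (intro peval_superset) auto
  also have "\<dots> = (\<Sum>\<mu>\<in>?F. lk A \<mu> * mon_value \<mu> x) + (\<Sum>\<mu>\<in>?F. lk B \<mu> * mon_value \<mu> x)"
    by (simp add: lookup_add distrib_right sum.distrib)
  also have "\<dots> = peval A x + peval B x"
    by (subst (1 2) peval_superset[of ?F]) auto
  finally show ?thesis .
qed

lemma peval_sum: "finite I \<Longrightarrow> peval (\<Sum>i\<in>I. f i) x = (\<Sum>i\<in>I. peval (f i) x)"
  by (induction I rule: finite_induct) (simp_all add: peval_add peval_def[of 0])

lemma peval_Xvar_mult: "peval (Xvar i * R) x = x i * peval R x"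
proof -
  let ?e = "Poly_Mapping.single i (1::nat)"
  have inj: "inj_on (\<lambda>b. ?e + b) (ks R)" by (auto intro: inj_onI)
  have "peval (Xvar i * R) x = (\<Sum>b\<in>ks R. lk (Xvar i * R) (?e + b) * mon_value (?e + b) x)"
    unfolding peval_def mon_value_def[symmetric] Xvar_def Xmon_def[symmetric] keys_Xmon_mult
    by (simp only: sum.reindex[OF inj] comp_def)
  also have "\<dots> = (\<Sum>b\<in>ks R. x i * (lk R b * mon_value b x))"
    by (simp add: Xvar_def lookup_single_mult mon_value_add mon_value_single mult.left_commute)
  also have "\<dots> = x i * peval R x"
    by (simp add: peval_def mon_value_def sum_distrib_left)
  finally show ?thesis .
qed

lemma peval_Spoly_mult: "peval (Spoly n * R) x = (\<Sum>i\<le>n. x i) * peval R x"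
  unfolding Spoly_def by (simp add: sum_distrib_right peval_sum peval_Xvar_mult)

lemma Spoly_mult_In:
  assumes "homogeneous R" "in_vars n R"
  shows "Spoly n * R \<in> In n"
proof -
  obtain d where d: "\<forall>b\<in>ks R. mdeg b = d" using assms(1) unfolding homogeneous_def by blast
  have "in_vars n (Spoly n * R)" unfolding in_vars_def
  proof
    fix \<mu> assume "\<mu> \<in> ks (Spoly n * R)"
    then obtain j b where jb: "j \<le> n" "b \<in> ks R" "\<mu> = Poly_Mapping.single j 1 + b"
      by (rule keys_Spoly_mult)
    have "ks \<mu> \<subseteq> ks (Poly_Mapping.single j (1::nat)) \<union> ks b" unfolding jb(3) by (rule keys_add)
    also have "\<dots> \<subseteq> {..n}" using jb assms(2) unfolding in_vars_def by auto
    finally show "ks \<mu> \<subseteq> {..n}" .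
  qed
  moreover have "homogeneous (Spoly n * R)" unfolding homogeneous_def
  proof (intro exI ballI)
    fix \<mu> assume "\<mu> \<in> ks (Spoly n * R)"
    then obtain j b where "b \<in> ks R" "\<mu> = Poly_Mapping.single j 1 + b"
      by (rule keys_Spoly_mult)
    then show "mdeg \<mu> = 1 + d" using d by (simp add: mdeg_add)
  qed
  ultimately show ?thesis unfolding In_def by (simp add: peval_Spoly_mult)
qed

definition newton_point :: "nat \<Rightarrow> (nat \<Rightarrow>\<^sub>0 nat) \<Rightarrow> (nat \<Rightarrow> nat)" where
  "newton_point n b = (\<lambda>j. if j \<in> {1..n} then lk b j else 0)"

definition newton_monomial :: "nat \<Rightarrow> nat \<Rightarrow> (nat \<Rightarrow> nat) \<Rightarrow> (nat \<Rightarrow>\<^sub>0 nat)" where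
  "newton_monomial n d m = Abs_poly_mapping (\<lambda>j. if j = 0 then d - 1 - absm n m else m j)"

lemma lookup_newton_monomial:
  assumes "\<forall>j. j \<notin> {1..n} \<longrightarrow> m j = 0"
  shows "lk (newton_monomial n d m) j = (if j = 0 then d - 1 - absm n m else m j)"
proof -
  have "finite {j. (if j = 0 then d - 1 - absm n m else m j) \<noteq> 0}"
    by (rule finite_subset[of _ "{..n}"]) (use assms in \<open>auto split: if_splits\<close>)
  then show ?thesis unfolding newton_monomial_def by simp
qed

lemma newton_support_alt:
  "newton_support n d Q =
     {m. (\<forall>j. j \<notin> {1..n} \<longrightarrow> m j = 0) \<and> absm n m + 1 \<le> d \<and> newton_monomial n d m \<in> ks Q}"
  unfolding newton_support_def newton_monomial_def by (simp add: in_keys_iff)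

lemma newton_point_inverse:
  assumes vars: "ks b \<subseteq> {..n}" and deg: "mdeg b + 1 = d"
  shows "absm n (newton_point n b) = d - 1 - lk b 0"
    and "newton_monomial n d (newton_point n b) = b"
proof -
  have mdeg_b: "mdeg b = lk b 0 + (\<Sum>j=1..n. lk b j)"
    using vars by (simp add: mdeg_superset[of "{..n}"] atMost_atLeast0 sum.atLeast_Suc_atMost)
  have absm_b: "absm n (newton_point n b) = (\<Sum>j=1..n. lk b j)"
    unfolding absm_def newton_point_def by (rule sum.cong) auto
  then show "absm n (newton_point n b) = d - 1 - lk b 0" using deg mdeg_b by simp
  have supp: "\<forall>j. j \<notin> {1..n} \<longrightarrow> newton_point n b j = 0" unfolding newton_point_def by auto
  have first: "d - 1 - absm n (newton_point n b) = lk b 0" using absm_b deg mdeg_b by simp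
  show "newton_monomial n d (newton_point n b) = b"
  proof (rule poly_mapping_eqI)
    fix j
    have "j \<notin> {1..n} \<Longrightarrow> j \<noteq> 0 \<Longrightarrow> lk b j = 0" using vars by (auto simp: in_keys_iff)
    then show "lk (newton_monomial n d (newton_point n b)) j = lk b j"
      unfolding lookup_newton_monomial[OF supp] first by (auto simp: newton_point_def)
  qed
qed

lemma newton_support_eq:
  assumes vars: "in_vars n Q" and deg: "\<forall>b\<in>ks Q. mdeg b + 1 = d"
  shows "newton_support n d Q = newton_point n ` ks Q"
proof
  show "newton_support n d Q \<subseteq> newton_point n ` ks Q"
  proof
    fix m assume "m \<in> newton_support n d Q"
    then have m: "\<forall>j. j \<notin> {1..n} \<longrightarrow> m j = 0" "newton_monomial n d m \<in> ks Q"
      unfolding newton_support_alt by auto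
    have "newton_point n (newton_monomial n d m) = m"
      using m(1) by (auto simp: newton_point_def lookup_newton_monomial[OF m(1)])
    with m(2) show "m \<in> newton_point n ` ks Q" by (metis image_eqI)
  qed
  show "newton_point n ` ks Q \<subseteq> newton_support n d Q"
  proof
    fix m assume "m \<in> newton_point n ` ks Q"
    then obtain b where b: "b \<in> ks Q" "m = newton_point n b" by auto
    have "ks b \<subseteq> {..n}" "mdeg b + 1 = d" using b(1) vars deg unfolding in_vars_def by auto
    note inv = newton_point_inverse[OF this]
    have "absm n m + 1 \<le> d" using inv(1) b(2) \<open>mdeg b + 1 = d\<close> by simp
    moreover have "\<forall>j. j \<notin> {1..n} \<longrightarrow> m j = 0" using b(2) by (simp add: newton_point_def)
    ultimately show "m \<in> newton_support n d Q"
      using inv(2) b unfolding newton_support_alt by auto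
  qed
qed

text \<open>The size of the Newton diagram of Q is d minus the degree of the gcd of the
  monomials of Q: its maximal |m| is d - 1 - (min exponent of X_0) and its
  coordinatewise minima are the minimal exponents of X_1..X_n.\<close>
lemma size_newton_points:
  assumes vars: "in_vars n Q" and deg: "\<forall>b\<in>ks Q. mdeg b + 1 = d" and "Q \<noteq> 0"
  shows "size_set n (newton_point n ` ks Q) = int (d - (\<Sum>i\<le>n. minexp Q i))"
proof -
  let ?K = "newton_point n ` ks Q"
  have inv: "absm n (newton_point n b) = d - 1 - lk b 0" if "b \<in> ks Q" for b
    using newton_point_inverse(1) that vars deg unfolding in_vars_def by blast
  have "absm n ` ?K = (\<lambda>b. d - 1 - lk b 0) ` ks Q"
    unfolding image_image using inv by (rule image_cong[OF refl])
  moreover have "Max ((\<lambda>b. d - 1 - lk b 0) ` ks Q) = d - 1 - minexp Q 0"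
  proof (rule Max_eqI)
    show "y \<le> d - 1 - minexp Q 0" if "y \<in> (\<lambda>b. d - 1 - lk b 0) ` ks Q" for y
      using that minexp_le by (auto intro: diff_le_mono2)
    obtain b where "b \<in> ks Q" "lk b 0 = minexp Q 0" using minexp_attained[OF \<open>Q \<noteq> 0\<close>] by blast
    then show "d - 1 - minexp Q 0 \<in> (\<lambda>b. d - 1 - lk b 0) ` ks Q" by force
  qed simp
  ultimately have max: "Max (absm n ` ?K) = d - 1 - minexp Q 0" by simp
  have mins: "(\<Sum>j=1..n. Min ((\<lambda>m. m j) ` ?K)) = (\<Sum>j=1..n. minexp Q j)"
    by (rule sum.cong) (simp_all add: minexp_def image_image newton_point_def)
  have split: "(\<Sum>i\<le>n. minexp Q i) = minexp Q 0 + (\<Sum>j=1..n. minexp Q j)"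
    by (simp add: atMost_atLeast0 sum.atLeast_Suc_atMost)
  obtain b where b: "b \<in> ks Q" using \<open>Q \<noteq> 0\<close> by fastforce
  then have "(\<Sum>i\<le>n. minexp Q i) \<le> mdeg b"
    using vars unfolding in_vars_def by (auto simp: mdeg_superset[of "{..n}"] minexp_le sum_mono)
  then have "(\<Sum>i\<le>n. minexp Q i) + 1 \<le> d" using deg b by auto
  then show ?thesis unfolding size_set_def max mins using split by linarith
qed

text \<open>If X_i c1 = X_j c2 then the Newton points of c1 and c2 coincide or are adjacent:
  their difference is e_j - e_i, with e_0 read as 0.\<close>
lemma adjacent_of_common_multiple:
  assumes eq: "Poly_Mapping.single i 1 + c1 = Poly_Mapping.single j 1 + c2"
    and ij: "i \<le> n" "j \<le> n" and ne: "newton_point n c1 \<noteq> newton_point n c2"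
  shows "adjacent n (newton_point n c1) (newton_point n c2)"
proof -
  have "i \<noteq> j" using eq ne by auto
  have diff: "int (lk c1 l) - int (lk c2 l) = (if l = j then 1 else 0) - (if l = i then 1 else 0)"
    for l
  proof -
    have "lk (Poly_Mapping.single i (1::nat)) l + lk c1 l = lk (Poly_Mapping.single j 1) l + lk c2 l"
      using eq by (metis lookup_add)
    then show ?thesis by (cases "l = i"; cases "l = j") (simp_all add: lookup_single)
  qed
  define v where "v = (\<lambda>l. int (newton_point n c1 l) - int (newton_point n c2 l))"
  have v: "v l = (if l \<in> {1..n} then (if l = j then 1 else 0) - (if l = i then 1 else 0) else 0)"
    for l
    unfolding v_def newton_point_def using diff[of l] by auto
  have "\<exists>j'\<in>{1..n}. v = unitv j' \<or> v = - unitv j' \<or>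
          (\<exists>k\<in>{1..n}. j' \<noteq> k \<and> v = unitv j' - unitv k)"
  proof (cases "i = 0")
    case True
    then have "j \<in> {1..n}" using \<open>i \<noteq> j\<close> ij by auto
    moreover have "v = unitv j" using True \<open>j \<in> {1..n}\<close> by (intro ext) (simp add: v unitv_def)
    ultimately show ?thesis by (intro bexI[of _ j] disjI1)
  next
    case False
    show ?thesis
    proof (cases "j = 0")
      case True
      have "i \<in> {1..n}" using \<open>i \<noteq> 0\<close> ij by auto
      moreover have "v = - unitv i" using True \<open>i \<in> {1..n}\<close> by (intro ext) (simp add: v unitv_def)
      ultimately show ?thesis by (intro bexI[of _ i] disjI2 disjI1)
    next
      case False
      have "i \<in> {1..n}" "j \<in> {1..n}" using False \<open>i \<noteq> 0\<close> ij by auto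
      moreover have "v = unitv j - unitv i"
        using \<open>i \<in> {1..n}\<close> \<open>j \<in> {1..n}\<close> by (intro ext) (simp add: v unitv_def)
      ultimately show ?thesis using \<open>i \<noteq> j\<close> by (intro bexI[of _ j] disjI2 bexI[of _ i] conjI) auto
    qed
  qed
  then show ?thesis unfolding adjacent_def Let_def v_def using ne by simp
qed

definition restrict_keys :: "(nat \<Rightarrow>\<^sub>0 nat) set \<Rightarrow> mpoly \<Rightarrow> mpoly" where
  "restrict_keys A F = Poly_Mapping.mapp (\<lambda>\<mu> c. c when \<mu> \<in> A) F"

lemma lookup_restrict_keys: "lk (restrict_keys A F) \<mu> = (lk F \<mu> when \<mu> \<in> A)"
  by (simp add: restrict_keys_def lookup_mapp when_def in_keys_iff)

lemma keys_restrict_keys: "ks (restrict_keys A F) = ks F \<inter> A"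
  by (auto simp: in_keys_iff lookup_restrict_keys)

lemma restrict_keys_split: "F = restrict_keys A F + restrict_keys (- A) F"
  by (rule poly_mapping_eqI) (simp add: lookup_add lookup_restrict_keys when_def)

lemma indecomposable_overlap:
  assumes ind: "indecomposable n (Spoly n * Q)" and "homogeneous Q" "in_vars n Q"
    and "ks Q \<inter> A \<noteq> {}" "ks Q \<inter> - A \<noteq> {}"
  shows "ks (Spoly n * restrict_keys A Q) \<inter> ks (Spoly n * restrict_keys (- A) Q) \<noteq> {}"
proof
  assume disj: "ks (Spoly n * restrict_keys A Q) \<inter> ks (Spoly n * restrict_keys (- A) Q) = {}"
  have part_In: "Spoly n * restrict_keys B Q \<in> In n" for B
    using assms(2,3) unfolding homogeneous_def in_vars_def keys_restrict_keys
    by (intro Spoly_mult_In) (auto simp: homogeneous_def in_vars_def keys_restrict_keys)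
  have part_nz: "Spoly n * restrict_keys B Q \<noteq> 0" if "ks Q \<inter> B \<noteq> {}" for B
  proof -
    have "ks (restrict_keys B Q) \<noteq> {}" using that by (simp add: keys_restrict_keys)
    then show ?thesis by (intro mult_nonzero Spoly_nonzero) auto
  qed
  have "Spoly n * Q = Spoly n * restrict_keys A Q + Spoly n * restrict_keys (- A) Q"
    by (subst restrict_keys_split[of Q A]) (simp add: distrib_left)
  with disj part_In part_nz[OF assms(4)] part_nz[OF assms(5)]
  have "\<exists>P1 P2. P1 \<in> In n \<and> P2 \<in> In n \<and> P1 \<noteq> 0 \<and> P2 \<noteq> 0 \<and>
      ks P1 \<inter> ks P2 = {} \<and> Spoly n * Q = P1 + P2"
    by (intro exI[of _ "Spoly n * restrict_keys A Q"] exI[of _ "Spoly n * restrict_keys (- A) Q"])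
      simp
  with ind show False unfolding indecomposable_def by blast
qed

text \<open>Otherwise split the monomials of Q according to the component of a point; the two
  parts of S Q share a monomial, which yields adjacent points in different components.\<close>
lemma connected_newton_points:
  assumes ind: "indecomposable n (Spoly n * Q)" and hom: "homogeneous Q" and vars: "in_vars n Q"
  shows "connected_set n (newton_point n ` ks Q)"
  unfolding connected_set_def
proof (intro ballI)
  let ?K = "newton_point n ` ks Q"
  let ?r = "\<lambda>x y. x \<in> ?K \<and> y \<in> ?K \<and> adjacent n x y"
  fix a b assume a: "a \<in> ?K" and b: "b \<in> ?K"
  show "?r\<^sup>*\<^sup>* a b"
  proof (rule ccontr)
    assume not_ab: "\<not> ?r\<^sup>*\<^sup>* a b"
    define A where "A = {\<mu>. ?r\<^sup>*\<^sup>* a (newton_point n \<mu>)}"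
    have "ks Q \<inter> A \<noteq> {}" "ks Q \<inter> - A \<noteq> {}" using a b not_ab unfolding A_def by auto
    then obtain \<mu> where \<mu>: "\<mu> \<in> ks (Spoly n * restrict_keys A Q)"
        "\<mu> \<in> ks (Spoly n * restrict_keys (- A) Q)"
      using indecomposable_overlap[OF ind hom vars] by blast
    obtain i c1 where c1: "i \<le> n" "c1 \<in> ks (restrict_keys A Q)" "\<mu> = Poly_Mapping.single i 1 + c1"
      using \<mu>(1) by (rule keys_Spoly_mult)
    obtain j c2 where c2: "j \<le> n" "c2 \<in> ks (restrict_keys (- A) Q)"
        "\<mu> = Poly_Mapping.single j 1 + c2"
      using \<mu>(2) by (rule keys_Spoly_mult)
    have c1A: "c1 \<in> ks Q" "c1 \<in> A" and c2A: "c2 \<in> ks Q" "c2 \<notin> A"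
      using c1(2) c2(2) by (auto simp: keys_restrict_keys)
    then have "newton_point n c1 \<noteq> newton_point n c2" unfolding A_def by auto
    with c1(1,3) c2(1,3) have "adjacent n (newton_point n c1) (newton_point n c2)"
      using adjacent_of_common_multiple[of i c1 j c2 n] by simp
    with c1A(1) c2A(1) have "?r (newton_point n c1) (newton_point n c2)" by blast
    with c1A(2) have "c2 \<in> A" unfolding A_def by (auto intro: rtranclp.rtrancl_into_rtrancl)
    with c2A(2) show False by contradiction
  qed
qed

theorem mainTheorem12:
  fixes n :: nat and P Q :: mpoly
  assumes "n \<ge> 1"
    and "P \<in> In n" and "P \<noteq> 0"
    and "P = Spoly n * Q"
  shows "(indecomposable n P \<longrightarrow> connected_set n (newton_support n (tdeg P) Q))
       \<and> size_set n (newton_support n (tdeg P) Q) = int (pdeg P)"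
proof -
  have P: "homogeneous P" "in_vars n P" using assms(2) unfolding In_def by auto
  have "Q \<noteq> 0" using assms(3,4) by auto
  then have Q: "homogeneous Q" "in_vars n Q"
    using homogeneous_factor[of "Spoly n" Q] in_vars_factor[of n "Spoly n" Q] P assms(4)
    by (auto simp: Spoly_nonzero)
  have deg: "\<forall>b\<in>ks Q. mdeg b + 1 = tdeg P"
    using degree_Spoly_factor P(1) \<open>Q \<noteq> 0\<close> assms(4) by blast
  have K: "newton_support n (tdeg P) Q = newton_point n ` ks Q"
    using newton_support_eq[OF Q(2) deg] .
  have "pdeg P = tdeg P - (\<Sum>i\<le>n. minexp Q i)"
    using pdeg_eq_minexp[OF assms(3) P] minexp_Spoly_mult[OF assms(1) \<open>Q \<noteq> 0\<close>] assms(4) by simp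
  then show ?thesis
    unfolding K using connected_newton_points[OF _ Q] size_newton_points[OF Q(2) deg \<open>Q \<noteq> 0\<close>]
      assms(4) by simp
qed

end
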